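(* Let $m\geq 1$ and let $f=a_0+a_1z+\cdots+a_mz^m\in\mathbb{Z}[z]$ be a primitive polynomial such that $a_m=\pm p^kd$ for some positive integers $k,d$ and a prime $p$ with $p\nmid d$, and such that every complex zero of $f$ lies outside the closed disk $\{z\in\mathbb{C}:|z|\leq d\}$. Suppose there is an index $j$ with $1\leq j\leq m$ such that $p\nmid a_{m-j}$, and suppose $|a_0/q|\leq|a_m|$, where $q$ is the smallest prime divisor of $a_0$. Then $f$ is a product of at most $\min\{k,j\}$ irreducible polynomials in $\mathbb{Z}[z]$. In particular, if $k=1$ or $j=1$, then $f$ is irreducible in $\mathbb{Z}[z]$.
   Context: A polynomial in $\mathbb{Z}[z]$ is primitive if the greatest common divisor of its coefficients is $1$. "$f$ is a product of at most $r$ irreducible polynomials" means that in a factorization of $f$ into irreducible elements of $\mathbb{Z}[z]$, the number of factors (counted with multiplicity) is at most $r$. *)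

theory Defs
  imports Complex_Main "HOL-Computational_Algebra.Computational_Algebra"
begin

definition product_of_at_most_irreducibles :: "nat \<Rightarrow> 'a::comm_semiring_1 \<Rightarrow> bool" where
  "product_of_at_most_irreducibles r f \<longleftrightarrow>
     (\<exists>A. (\<forall>g\<in>#A. irreducible g) \<and> prod_mset A = f \<and> size A \<le> r)"

end

theory Submission
  imports Defs
begin

text \<open>
  Let \<open>f = g h\<close> with both factors non-constant. All zeros lie outside the closed disk of
  radius \<open>d \<ge> 1\<close>, so comparing constant and leading coefficients through the product of the
  roots gives \<open>|g(0)| > d |lc g|\<close> and \<open>|h(0)| > |lc h|\<close>. Hence \<open>h(0)\<close> is not a unit, so
  \<open>|h(0)| \<ge> q\<close>, and \<open>|a\<^sub>0| \<le> q |a\<^sub>m|\<close> forces \<open>|g(0)| \<le> |a\<^sub>m|\<close>, i.e. \<open>|lc h| > d\<close>; by symmetry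
  \<open>|lc g| > d\<close>. As \<open>lc g\<close> divides \<open>\<plusminus>p\<^sup>k d\<close>, \<open>p\<close> must divide it. So in a factorisation of
  \<open>f\<close> into \<open>s \<ge> 2\<close> irreducibles (all non-constant, \<open>f\<close> being primitive) \<open>p\<close> divides every
  leading coefficient. Then \<open>p\<^sup>s\<close> divides \<open>a\<^sub>m\<close>, giving \<open>s \<le> k\<close>, and modulo \<open>p\<close> the product
  has degree at most \<open>m - s\<close>, so \<open>p \<nmid> a\<^sub>m\<^sub>-\<^sub>j\<close> gives \<open>s \<le> j\<close>.
\<close>

lemma prod_mset_greater:
  fixes M :: "'a::linordered_idom multiset"
  assumes "M \<noteq> {#}" "\<forall>x\<in>#M. x > D" "D \<ge> 1"
  shows "prod_mset M > D"
  using assms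
proof (induction M)
  case empty
  then show ?case by simp
next
  case (add x M)
  show ?case
  proof (cases "M = {#}")
    case True
    then show ?thesis using add by simp
  next
    case False
    then have "prod_mset M > D" "x > D" using add by simp_all
    then have "x * prod_mset M > 1 * D" using add.prems(3) by (intro mult_strict_mono') auto
    then show ?thesis by simp
  qed
qed

lemma norm_prod_mset:
  "norm (prod_mset (M :: 'a::real_normed_field multiset)) = prod_mset (image_mset norm M)"
  by (induction M) (auto simp: norm_mult)

lemma norm_poly_0_greater:
  fixes g :: "complex poly"
  assumes "degree g \<ge> 1" "\<forall>z. poly g z = 0 \<longrightarrow> cmod z > D" "D \<ge> 1"
  shows "cmod (poly g 0) > cmod (lead_coeff g) * D"
proof -
  have g0: "g \<noteq> 0" using assms(1) by auto
  have "poly g 0 = poly (smult (lead_coeff g) (\<Prod>x\<in>#proots g. [:-x, 1:])) 0"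
    by (simp add: complex_poly_decompose_multiset)
  also have "\<dots> = lead_coeff g * (\<Prod>x\<in>#proots g. - x)"
    by (simp add: poly_prod_mset multiset.map_comp o_def)
  finally have norm_eq: "cmod (poly g 0) = cmod (lead_coeff g) * (\<Prod>x\<in>#proots g. cmod x)"
    by (simp add: norm_mult norm_prod_mset multiset.map_comp o_def)
  have "(\<Prod>x\<in>#proots g. cmod x) > D"
  proof (rule prod_mset_greater)
    show "image_mset cmod (proots g) \<noteq> {#}"
      using assms(1) size_proots_complex[of g] by auto
  qed (use assms g0 in auto)
  moreover have "cmod (lead_coeff g) > 0" using g0 by simp
  ultimately show ?thesis unfolding norm_eq by simp
qed

lemma map_poly_of_int_mult:
  "map_poly (of_int :: int \<Rightarrow> 'a::comm_ring_1) (g * h) = map_poly of_int g * map_poly of_int h"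
  by (rule poly_eqI) (simp add: coeff_map_poly coeff_mult)

lemma abs_coeff_0_greater:
  fixes g :: "int poly" and D :: int
  assumes "degree g \<ge> 1" "\<forall>z::complex. poly (map_poly of_int g) z = 0 \<longrightarrow> cmod z > of_int D"
    and "D \<ge> 1"
  shows "\<bar>coeff g 0\<bar> > \<bar>lead_coeff g\<bar> * D"
proof -
  let ?G = "map_poly (of_int :: int \<Rightarrow> complex) g"
  have "degree ?G = degree g" by (simp add: degree_map_poly)
  then have "cmod (poly ?G 0) > cmod (lead_coeff ?G) * of_int D"
    using assms by (intro norm_poly_0_greater) auto
  moreover have "lead_coeff ?G = of_int (lead_coeff g)" "poly ?G 0 = of_int (coeff g 0)"
    using \<open>degree ?G = degree g\<close> by (simp_all add: coeff_map_poly poly_0_coeff_0)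
  ultimately show ?thesis
    by (metis norm_of_int of_int_abs of_int_less_iff of_int_mult)
qed

lemma abs_lead_coeff_factor_greater:
  fixes f g h :: "int poly" and d q :: int
  assumes "f = g * h" "degree g \<ge> 1" "degree h \<ge> 1" "d \<ge> 1"
    and roots: "\<forall>z::complex. poly (map_poly of_int f) z = 0 \<longrightarrow> cmod z > of_int d"
    and "q > 0" and q_least: "\<forall>r. prime r \<and> r dvd coeff f 0 \<longrightarrow> q \<le> r"
    and "\<bar>coeff f 0\<bar> \<le> q * \<bar>lead_coeff f\<bar>"
  shows "\<bar>lead_coeff h\<bar> > d"
proof -
  have of_f: "map_poly (of_int :: int \<Rightarrow> complex) f = map_poly of_int g * map_poly of_int h"
    using assms(1) by (simp add: map_poly_of_int_mult)
  have g_bound: "\<bar>coeff g 0\<bar> > \<bar>lead_coeff g\<bar> * d"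
    using assms(2,4) roots of_f by (intro abs_coeff_0_greater) auto
  have "\<bar>coeff h 0\<bar> > \<bar>lead_coeff h\<bar> * 1"
    using assms(3,4) roots of_f by (intro abs_coeff_0_greater) fastforce+
  moreover have "lead_coeff h \<noteq> 0" using assms(3) by auto
  then have "\<bar>lead_coeff h\<bar> \<ge> 1" by linarith
  ultimately have "coeff h 0 \<noteq> 0" "\<not> is_unit (coeff h 0)" by auto
  then obtain r where r: "prime r" "r dvd coeff h 0" using prime_divisor_exists by blast
  have f_0: "coeff f 0 = coeff g 0 * coeff h 0" using assms(1) by (simp add: coeff_mult_0)
  then have "q \<le> r" using q_least r by simp
  also have "r \<le> \<bar>coeff h 0\<bar>" using dvd_imp_le_int[OF \<open>coeff h 0 \<noteq> 0\<close> r(2)] by linarith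
  finally have "\<bar>coeff g 0\<bar> * q \<le> \<bar>coeff f 0\<bar>"
    unfolding f_0 abs_mult by (simp add: mult_left_mono)
  also have "\<dots> \<le> q * (\<bar>lead_coeff g\<bar> * \<bar>lead_coeff h\<bar>)"
    using assms(1,8) by (simp add: lead_coeff_mult abs_mult)
  finally have "\<bar>coeff g 0\<bar> \<le> \<bar>lead_coeff g\<bar> * \<bar>lead_coeff h\<bar>"
    using \<open>q > 0\<close> by (simp add: mult.commute)
  with g_bound have "\<bar>lead_coeff g\<bar> * d < \<bar>lead_coeff g\<bar> * \<bar>lead_coeff h\<bar>" by linarith
  then show ?thesis by (simp add: mult_less_cancel_left)
qed

lemma prime_dvd_if_dvd_prime_power_mult:
  fixes p a d :: int
  assumes "prime p" "a dvd p ^ k * d" "d \<noteq> 0" "\<bar>a\<bar> > \<bar>d\<bar>"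
  shows "p dvd a"
proof (rule ccontr)
  assume "\<not> p dvd a"
  then have "coprime a (p ^ k)" by (rule prime_imp_power_coprime[OF assms(1)])
  then have "a dvd d" using assms(2) by (simp add: coprime_dvd_mult_right_iff)
  then have "\<bar>a\<bar> \<le> \<bar>d\<bar>" by (rule dvd_imp_le_int[OF assms(3)])
  then show False using assms(4) by simp
qed

lemma prime_dvd_lead_coeff_factor:
  fixes f g h :: "int poly" and p d q :: int
  assumes "f = g * h" "degree g \<ge> 1" "degree h \<ge> 1" "d \<ge> 1"
    and "prime p" "lead_coeff f dvd p ^ k * d"
    and "\<forall>z::complex. poly (map_poly of_int f) z = 0 \<longrightarrow> cmod z > of_int d"
    and "q > 0" "\<forall>r. prime r \<and> r dvd coeff f 0 \<longrightarrow> q \<le> r"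
    and "\<bar>coeff f 0\<bar> \<le> q * \<bar>lead_coeff f\<bar>"
  shows "p dvd lead_coeff g"
proof (rule prime_dvd_if_dvd_prime_power_mult[OF \<open>prime p\<close>])
  show "lead_coeff g dvd p ^ k * d"
    using assms(1,6) by (metis dvd_triv_left dvd_trans lead_coeff_mult)
  have "f = h * g" using assms(1) by (simp add: mult.commute)
  then show "\<bar>lead_coeff g\<bar> > \<bar>d\<bar>"
    using assms(2-4,7-10) abs_lead_coeff_factor_greater[of f h g d q] by simp
qed (use assms(4) in simp)

lemma irreducible_factorization_exists:
  fixes x :: "'a::factorial_semiring"
  assumes "x \<noteq> 0" "\<not> is_unit x"
  obtains A where "\<forall>g\<in>#A. irreducible g" "prod_mset A = x"
proof -
  obtain A where A: "\<And>y. y \<in># A \<Longrightarrow> prime y" "normalize (prod_mset A) = normalize x"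
    using prime_factorization_exists'[OF assms(1)] by blast
  obtain u where u: "is_unit u" "x = u * prod_mset A"
    using associatedE2[OF A(2)] by blast
  have "A \<noteq> {#}" using u assms(2) by auto
  then obtain a where a: "a \<in># A" by blast
  define B where "B = add_mset (u * a) (A - {#a#})"
  have "prod_mset B = u * (a * prod_mset (A - {#a#}))" unfolding B_def by (simp add: mult.assoc)
  also have "\<dots> = x" using a u by (simp add: prod_mset.remove)
  finally have "prod_mset B = x" .
  moreover have "\<forall>g\<in>#B. irreducible g"
    using A(1) a u(1) unfolding B_def
    by (auto dest: in_diffD intro: prime_elem_imp_irreducible simp: irreducible_mult_unit_left)
  ultimately show thesis using that by blast
qed

lemma degree_pos_if_irreducible_dvd_primitive:
  fixes f g :: "int poly"
  assumes "irreducible g" "g dvd f" "content f = 1"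
  shows "degree g \<ge> 1"
proof (rule ccontr)
  assume "\<not> degree g \<ge> 1"
  then have g_const: "g = [:coeff g 0:]" by (simp add: degree_0_id)
  then have "coeff g 0 dvd 1"
    using assms(2,3) const_poly_dvd_iff_dvd_content by metis
  then have "is_unit g" by (subst g_const) (simp add: is_unit_const_poly_iff)
  then show False using assms(1) by (simp add: irreducible_not_unit)
qed

lemma degree_cofactor_pos:
  fixes A :: "int poly multiset"
  assumes "\<forall>g\<in>#A. irreducible g" "content (prod_mset A) = 1" "g \<in># A" "size A \<ge> 2"
  shows "degree (prod_mset (A - {#g#})) \<ge> 1"
proof -
  have "size (A - {#g#}) \<ge> 1" using assms(3,4) by (simp add: size_Diff_singleton)
  then obtain h where h: "h \<in># A - {#g#}" by (metis size_empty not_one_le_zero multiset_nonemptyE)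
  have cofactor_dvd: "prod_mset (A - {#g#}) dvd prod_mset A"
    using assms(3) by (simp add: prod_mset.remove)
  have "prod_mset A \<noteq> 0" using assms(2) by (metis content_0 zero_neq_one)
  then have "prod_mset (A - {#g#}) \<noteq> 0" using cofactor_dvd by (metis dvd_0_left)
  have "h dvd prod_mset (A - {#g#})" using h by (rule dvd_prod_mset)
  then have "degree h \<le> degree (prod_mset (A - {#g#}))"
    using \<open>prod_mset (A - {#g#}) \<noteq> 0\<close> by (rule dvd_imp_degree_le)
  moreover have "degree h \<ge> 1"
  proof (rule degree_pos_if_irreducible_dvd_primitive)
    show "irreducible h" using assms(1) in_diffD[OF h] by blast
    show "h dvd prod_mset A" using \<open>h dvd _\<close> cofactor_dvd by (rule dvd_trans)
  qed (rule assms(2))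
  ultimately show ?thesis by simp
qed

lemma prime_dvd_lead_coeff_irreducible_factor:
  fixes A :: "int poly multiset" and p d q :: int
  assumes irr: "\<forall>g\<in>#A. irreducible g" and "size A \<ge> 2" "g \<in># A" "prod_mset A = f"
    and "content f = 1" "d \<ge> 1" "prime p" "lead_coeff f dvd p ^ k * d"
    and "\<forall>z::complex. poly (map_poly of_int f) z = 0 \<longrightarrow> cmod z > of_int d"
    and "q > 0" "\<forall>r. prime r \<and> r dvd coeff f 0 \<longrightarrow> q \<le> r"
    and "\<bar>coeff f 0\<bar> \<le> q * \<bar>lead_coeff f\<bar>"
  shows "p dvd lead_coeff g"
proof (rule prime_dvd_lead_coeff_factor[of f g "prod_mset (A - {#g#})" d p k q])
  show "f = g * prod_mset (A - {#g#})" using assms(3,4) by (simp add: prod_mset.remove)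
  show "degree g \<ge> 1"
    using irr assms(3-5) dvd_prod_mset[OF assms(3)]
    by (intro degree_pos_if_irreducible_dvd_primitive[of g f]) auto
  show "degree (prod_mset (A - {#g#})) \<ge> 1"
    using irr assms(2-5) by (intro degree_cofactor_pos) auto
qed (use assms(6-) in auto)

lemma pow_dvd_lead_coeff_prod_mset:
  fixes A :: "'a::idom poly multiset"
  assumes "\<forall>g\<in>#A. p dvd lead_coeff g"
  shows "p ^ size A dvd lead_coeff (prod_mset A)"
  using assms by (induction A) (simp_all add: lead_coeff_mult mult_dvd_mono)

lemma le_if_prime_power_dvd_mult:
  fixes p d :: int
  assumes "prime p" "\<not> p dvd d" "p ^ n dvd p ^ k * d"
  shows "n \<le> k"
proof (rule ccontr)
  assume "\<not> n \<le> k"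
  then have "p ^ Suc k dvd p ^ n" by (intro le_imp_power_dvd) simp
  then have "p ^ k * p dvd p ^ k * d" using assms(3) by (metis dvd_trans power_Suc2)
  moreover have "p ^ k \<noteq> 0" using assms(1) by simp
  ultimately have "p dvd d" by (simp only: dvd_mult_cancel_left) simp
  then show False using assms(2) by simp
qed

lemma size_le_of_lead_coeff_dvd_prime_power:
  fixes A :: "int poly multiset" and p d :: int
  assumes "\<forall>g\<in>#A. p dvd lead_coeff g" "lead_coeff (prod_mset A) dvd p ^ k * d"
    and "prime p" "\<not> p dvd d"
  shows "size A \<le> k"
  using pow_dvd_lead_coeff_prod_mset[OF assms(1)] assms(2)
  by (meson dvd_trans le_if_prime_power_dvd_mult[OF assms(3,4)])

lemma dvd_high_coeffs_prod_mset:
  fixes A :: "'a::idom poly multiset"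
  assumes "\<forall>g\<in>#A. p dvd lead_coeff g" "0 \<notin># A" "i + size A > degree (prod_mset A)"
  shows "p dvd coeff (prod_mset A) i"
  using assms
proof (induction A arbitrary: i)
  case empty
  then show ?case by simp
next
  case (add g A)
  have "g \<noteq> 0" "prod_mset A \<noteq> 0" using add.prems(2) by auto
  then have deg: "i + 1 + size A > degree g + degree (prod_mset A)"
    using add.prems(3) by (simp add: degree_mult_eq)
  have "p dvd coeff g l * coeff (prod_mset A) (i - l)" if "l \<le> i" for l
  proof (cases "l \<ge> degree g")
    case True
    then have "p dvd coeff g l" using add.prems(1) by (cases "l = degree g") (auto simp: coeff_eq_0)
    then show ?thesis by simp
  next
    case False
    then have "p dvd coeff (prod_mset A) (i - l)" using add that deg by (intro add.IH) auto
    then show ?thesis by simp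
  qed
  then show ?case by (auto simp: coeff_mult intro!: dvd_sum)
qed

lemma size_le_of_not_dvd_coeff_prod_mset:
  fixes A :: "'a::idom poly multiset"
  assumes "\<forall>g\<in>#A. p dvd lead_coeff g" "0 \<notin># A" "j \<le> degree (prod_mset A)"
    and "\<not> p dvd coeff (prod_mset A) (degree (prod_mset A) - j)"
  shows "size A \<le> j"
proof (rule ccontr)
  assume "\<not> size A \<le> j"
  then have "degree (prod_mset A) - j + size A > degree (prod_mset A)" using assms(3) by simp
  then show False using assms dvd_high_coeffs_prod_mset by blast
qed

theorem theorem3:
  fixes f :: "int poly" and m k j :: nat and p d q :: int
  assumes "m \<ge> 1"
    and "degree f = m"
    and "content f = 1"
    and "prime p" and "k > 0" and "d > 0" and "\<not> p dvd d"
    and "coeff f m = p ^ k * d \<or> coeff f m = - (p ^ k * d)"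
    and "\<forall>z::complex. poly (map_poly of_int f) z = 0 \<longrightarrow> cmod z > of_int d"
    and "1 \<le> j" and "j \<le> m" and "\<not> p dvd coeff f (m - j)"
    and "prime q" and "q dvd coeff f 0" and "\<forall>r. prime r \<and> r dvd coeff f 0 \<longrightarrow> q \<le> r"
    and "\<bar>real_of_int (coeff f 0) / real_of_int q\<bar> \<le> \<bar>real_of_int (coeff f m)\<bar>"
  shows "product_of_at_most_irreducibles (min k j) f \<and> ((k = 1 \<or> j = 1) \<longrightarrow> irreducible f)"
proof -
  have "f \<noteq> 0" "\<not> is_unit f" using assms(1,2) dvd_imp_degree_le[of f 1] by auto
  then obtain A where A: "\<forall>g\<in>#A. irreducible g" "prod_mset A = f"
    by (rule irreducible_factorization_exists)
  have lc_f: "lead_coeff f dvd p ^ k * d" using assms(2,8) by auto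
  have "q > 0" using assms(13) prime_gt_0_int by blast
  with assms(16) have a0_bound: "\<bar>coeff f 0\<bar> \<le> q * \<bar>lead_coeff f\<bar>"
    by (simp add: assms(2) abs_div_pos divide_le_eq mult.commute flip: of_int_abs of_int_mult)
  have size_bound: "size A \<le> k \<and> size A \<le> j" if "size A \<ge> 2"
  proof -
    have p_dvd: "\<forall>g\<in>#A. p dvd lead_coeff g"
      using prime_dvd_lead_coeff_irreducible_factor[OF A(1) that _ A(2) assms(3) _ assms(4) lc_f
          assms(9) \<open>q > 0\<close> assms(15) a0_bound] assms(6) by auto
    moreover have "0 \<notin># A" using A(1) by auto
    ultimately show ?thesis
      using size_le_of_lead_coeff_dvd_prime_power[OF p_dvd _ assms(4,7)]
        size_le_of_not_dvd_coeff_prod_mset[OF p_dvd] A(2) lc_f assms(2,11,12) by auto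
  qed
  have "size A \<noteq> 0" using A(2) \<open>\<not> is_unit f\<close> by auto
  then have "size A \<le> min k j" using size_bound assms(5,10) by fastforce
  moreover have "irreducible f" if "k = 1 \<or> j = 1"
  proof -
    have "\<not> size A \<ge> 2" using that size_bound by auto
    then have "size A = 1" using \<open>size A \<noteq> 0\<close> by linarith
    then obtain g where "A = {#g#}" using size_1_singleton_mset by blast
    then show ?thesis using A by simp
  qed
  ultimately show ?thesis using A unfolding product_of_at_most_irreducibles_def by blast
qed

end
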